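(* Let $H=\bigcup_{j=1}^n(c_j,d_j)\subset\mathbb R$ with the closed intervals $[c_j,d_j]$ pairwise disjoint, let $\mathcal B$ be a finite index set and $m\ge1$. Assume: for each $\beta\in\mathcal B$, $b_\beta,\theta_\beta\in C^m(\bar H)$, $b_\beta(x)>0$ for all $x\in\bar H$, $\theta_\beta(H)\subset H$; and there exist an integer $\mu\ge1$ and $\kappa<1$ with $|\theta_\omega(x)-\theta_\omega(y)|\le\kappa|x-y|$ for all $\omega\in\mathcal B_\mu$ and $x,y\in\bar H$. For $s>0$ let $L_s$ be $(L_sf)(x)=\sum_{\beta\in\mathcal B}[b_\beta(x)]^sf(\theta_\beta(x))$, and let $v_s$ be its strictly positive $C^m$ eigenvector with eigenvalue $r(L_s)$. Let $\epsilon_0=1$ and for $\nu\ge1$ $$\epsilon_\nu=\sup\Big\{\frac{|\theta_\omega(x)-\theta_\omega(y)|}{|x-y|}:\omega\in\mathcal B_\nu,\ x,y\in H,\ x\ne y\Big\},$$ and $C_1=\sup\{|Db_\beta(x)|/b_\beta(x):\beta\in\mathcal B,x\in H\}$. Then for $s>0$, $$\sup\Big\{\frac{|Dv_s(x)|}{v_s(x)}:x\in\bar H\Big\}\le C_1s\sum_{\nu=0}^\infty\epsilon_\nu.$$ Moreover, if $\delta\in\{0,1\}$ and $(-1)^\delta Db_\omega(x)/b_\omega(x)\le0$ for all $\omega\in\mathcal B_\nu$, all $\nu\ge1$ and all $x\in\bar H$, then $(-1)^\delta Dv_s(x)\le0$ for all $x\in\bar H$ and all $s>0$.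
   Context: $D=d/dx$. $C^m(\bar H)$ denotes real $C^m$ functions on $H$ whose derivatives of order $\le m$ extend continuously to $\bar H$. $\mathcal B_\nu=\{(j_1,\ldots,j_\nu):j_k\in\mathcal B\}$; for $\omega=(j_1,\ldots,j_\nu)$, $\theta_\omega=\theta_{j_\nu}\circ\cdots\circ\theta_{j_1}$ and $b_\omega(x)=b_{j_\nu}(\theta_{(j_1,\ldots,j_{\nu-1})}(x))\cdots b_{j_2}(\theta_{j_1}(x))\,b_{j_1}(x)$. Under these hypotheses, $L_s$ acting on $C^m(\bar H)$ has a strictly positive $C^m$ eigenvector $v_s$, unique up to positive multiples, with eigenvalue $r(L_s)>0$, and $\sum_\nu\epsilon_\nu<\infty$. *)

theory Defs
  imports "HOL-Analysis.Analysis"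
begin

text \<open>Thus the derivatives of order \<le> m on H extend continuously to closure H.\<close>
definition Cm_closure :: "nat \<Rightarrow> real set \<Rightarrow> (real \<Rightarrow> real) \<Rightarrow> bool" where
  "Cm_closure m H f \<longleftrightarrow>
     (\<exists>g :: nat \<Rightarrow> real \<Rightarrow> real.
        (\<forall>x\<in>closure H. g 0 x = f x) \<and>
        (\<forall>k\<le>m. continuous_on (closure H) (g k)) \<and>
        (\<forall>k<m. \<forall>x\<in>H. (g k has_real_derivative g (Suc k) x) (at x)))"

text \<open>Derivative D f at a point x of a set S (relative to S); on closure H this is the
  continuous extension of the derivative to the endpoints (one-sided derivative there).\<close>
definition Dwithin :: "real set \<Rightarrow> (real \<Rightarrow> real) \<Rightarrow> real \<Rightarrow> real" where
  "Dwithin S f x = (THE D. (f has_real_derivative D) (at x within S))"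

text \<open>Words omega = (j_1,...,j_nu) are lists [j_1,...,j_nu];
  theta_omega = theta_{j_nu} o ... o theta_{j_1}.\<close>
fun theta_word :: "('b \<Rightarrow> real \<Rightarrow> real) \<Rightarrow> 'b list \<Rightarrow> real \<Rightarrow> real" where
  "theta_word \<theta> [] x = x"
| "theta_word \<theta> (j # \<omega>) x = theta_word \<theta> \<omega> (\<theta> j x)"

fun b_word :: "('b \<Rightarrow> real \<Rightarrow> real) \<Rightarrow> ('b \<Rightarrow> real \<Rightarrow> real) \<Rightarrow> 'b list \<Rightarrow> real \<Rightarrow> real" where
  "b_word b \<theta> [] x = 1"
| "b_word b \<theta> (j # \<omega>) x = b j x * b_word b \<theta> \<omega> (\<theta> j x)"

definition words :: "'b set \<Rightarrow> nat \<Rightarrow> 'b list set" where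
  "words B \<nu> = {\<omega>. length \<omega> = \<nu> \<and> set \<omega> \<subseteq> B}"

end

theory Submission
  imports Defs
begin

text \<open>Iterating the eigenvalue equation \<open>N\<close> times gives
  \<open>r ^ N * v = (\<Sum>\<omega>\<in>B\<^sub>N. b\<^sub>\<omega> powr s * (v \<circ> \<theta>\<^sub>\<omega>))\<close> on \<open>H\<close>. Differentiating it
  writes \<open>v'/v\<close> at \<open>x\<close> as an average, with weights \<open>b\<^sub>\<omega> x powr s * v (\<theta>\<^sub>\<omega> x)\<close>, of
  \<open>s * (b\<^sub>\<omega>'/b\<^sub>\<omega>) x + (v'/v) (\<theta>\<^sub>\<omega> x) * \<theta>\<^sub>\<omega>' x\<close>. By the chain rule along the word
  the first term is bounded by \<open>C1 * s * (\<Sum>k<N. \<epsilon> k)\<close>, and it has the prescribed sign under the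
  monotonicity hypothesis. The second is bounded by \<open>sup \<bar>v'/v\<bar> * \<epsilon> N\<close>, which tends to \<open>0\<close>:
  \<open>\<epsilon>\<close> is submultiplicative and \<open>\<epsilon> \<mu> \<le> \<kappa> < 1\<close>, so it decays geometrically. Letting
  \<open>N \<rightarrow> \<infinity>\<close> and passing to the closure of \<open>H\<close> by continuity gives both claims.\<close>

definition C1_closure :: "real set \<Rightarrow> (real \<Rightarrow> real) \<Rightarrow> (real \<Rightarrow> real) \<Rightarrow> bool" where
  "C1_closure H f f' \<longleftrightarrow>
     continuous_on (closure H) f \<and> continuous_on (closure H) f' \<and>
     (\<forall>x\<in>H. (f has_real_derivative f' x) (at x))"

lemma C1_closure_if_Cm_closure:
  assumes "Cm_closure m H f" "m \<ge> 1" "open H"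
  shows "\<exists>f'. C1_closure H f f'"
proof -
  obtain g where g0: "\<forall>x\<in>closure H. g 0 x = f x"
    and cont: "\<forall>k\<le>m. continuous_on (closure H) (g k)"
    and der: "\<forall>k<m. \<forall>x\<in>H. (g k has_real_derivative g (Suc k) x) (at x)"
    using assms(1) unfolding Cm_closure_def by blast
  have g0_H: "\<forall>x\<in>H. g 0 x = f x" using g0 closure_subset by blast
  have "continuous_on (closure H) f"
    using continuous_on_cong[OF refl g0[rule_format]] cont by force
  moreover have "(f has_real_derivative g 1 x) (at x)" if x: "x \<in> H" for x
    by (rule has_field_derivative_transform_within_open[OF _ assms(3) x, of "g 0"])
      (use der assms(2) x g0_H in auto)
  ultimately show ?thesis
    unfolding C1_closure_def using cont assms(2) by (intro exI[of _ "g 1"]) auto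
qed

lemma C1_closure_family_if_Cm_closure:
  assumes "\<forall>\<beta>\<in>B. Cm_closure m H (f \<beta>)" "m \<ge> 1" "open H"
  shows "\<exists>f'. \<forall>\<beta>\<in>B. C1_closure H (f \<beta>) (f' \<beta>)"
  using C1_closure_if_Cm_closure[OF _ assms(2,3)] assms(1) by (intro bchoice) blast

lemma Dwithin_eq:
  assumes "at x within S \<noteq> bot" "(f has_real_derivative D) (at x within S)"
  shows "Dwithin S f x = D"
  unfolding Dwithin_def
proof (rule the_equality)
  fix E assume "(f has_real_derivative E) (at x within S)"
  then show "E = D"
    using assms vector_derivative_unique_within
    by (metis has_real_derivative_iff_has_vector_derivative)
qed fact

lemma Dwithin_eq_at:
  assumes "x \<in> interior S" "(f has_real_derivative D) (at x)"
  shows "Dwithin S f x = D"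
  using Dwithin_eq[of x S f D] at_within_interior[OF assms(1)] assms(2) by simp

text \<open>\<open>f\<close> is the integral of \<open>f'\<close>, whose derivative within \<open>{a..b}\<close> is \<open>f'\<close> also at
  the endpoints.\<close>
lemma has_real_derivative_within_Icc:
  fixes f f' :: "real \<Rightarrow> real"
  assumes cf: "continuous_on {a..b} f" and cf': "continuous_on {a..b} f'"
    and der: "\<And>x. x \<in> {a<..<b} \<Longrightarrow> (f has_real_derivative f' x) (at x)"
    and x: "x \<in> {a..b}"
  shows "(f has_real_derivative f' x) (at x within {a..b})"
proof -
  have f_eq: "f y = f a + integral {a..y} f'" if y: "y \<in> {a..b}" for y
  proof -
    have "(f' has_integral f y - f a) {a..y}"
    proof (rule fundamental_theorem_of_calculus_interior)
      show "continuous_on {a..y} f" by (rule continuous_on_subset[OF cf]) (use y in auto)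
      show "(f has_vector_derivative f' z) (at z)" if "z \<in> {a<..<y}" for z
        using der[of z] that y by (simp add: has_real_derivative_iff_has_vector_derivative)
    qed (use y in auto)
    then show ?thesis by (simp add: integral_unique)
  qed
  have "((\<lambda>y. f a + integral {a..y} f') has_vector_derivative 0 + f' x) (at x within {a..b})"
    by (intro has_vector_derivative_add has_vector_derivative_const
        integral_has_vector_derivative[OF cf' x])
  then have "((\<lambda>y. f a + integral {a..y} f') has_real_derivative f' x) (at x within {a..b})"
    by (simp add: has_real_derivative_iff_has_vector_derivative)
  then show ?thesis
    by (rule has_field_derivative_transform_within[where d=1]) (use x f_eq[symmetric] in auto)
qed

lemma abs_derivative_le_if_difference_quotients_le:
  fixes f :: "real \<Rightarrow> real"
  assumes "open H" "x \<in> H" "(f has_real_derivative D) (at x)"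
    and "\<And>y. y \<in> H \<Longrightarrow> y \<noteq> x \<Longrightarrow> \<bar>f y - f x\<bar> / \<bar>y - x\<bar> \<le> E"
  shows "\<bar>D\<bar> \<le> E"
proof -
  have "((\<lambda>y. \<bar>(f y - f x) / (y - x)\<bar>) \<longlongrightarrow> \<bar>D\<bar>) (at x)"
    using assms(3) by (intro tendsto_rabs) (simp add: has_field_derivative_iff)
  moreover have "\<forall>\<^sub>F y in at x. \<bar>(f y - f x) / (y - x)\<bar> \<le> E"
    using eventually_at_in_open[OF assms(1,2)]
    by eventually_elim (use assms(4) in \<open>auto simp: abs_divide\<close>)
  ultimately show ?thesis by (rule tendsto_upperbound) simp
qed

lemma mult_le_abs_if_abs_le_1:
  fixes \<sigma> t :: real
  assumes "\<bar>\<sigma>\<bar> \<le> 1"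
  shows "\<sigma> * t \<le> \<bar>t\<bar>"
proof -
  have "\<sigma> * t \<le> \<bar>\<sigma>\<bar> * \<bar>t\<bar>" by (metis abs_ge_self abs_mult)
  also have "\<dots> \<le> \<bar>t\<bar>" using assms by (simp add: mult_left_le_one_le)
  finally show ?thesis .
qed

lemma compact_abs_bound:
  fixes f :: "real \<Rightarrow> real"
  assumes "compact S" "continuous_on S f"
  shows "\<exists>M. \<forall>x\<in>S. \<bar>f x\<bar> \<le> M"
  using compact_imp_bounded[OF compact_continuous_image[OF assms(2,1)]]
  by (auto simp: bounded_real)

lemma finite_compacts_separated:
  fixes S :: "'i \<Rightarrow> 'a::heine_borel set"
  assumes "finite I" "\<And>i. i \<in> I \<Longrightarrow> compact (S i) \<and> S i \<noteq> {}"
    and "\<And>i j. i \<in> I \<Longrightarrow> j \<in> I \<Longrightarrow> i \<noteq> j \<Longrightarrow> S i \<inter> S j = {}"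
  shows "\<exists>\<delta>>0. \<forall>i\<in>I. \<forall>j\<in>I. \<forall>x\<in>S i. \<forall>y\<in>S j. dist x y < \<delta> \<longrightarrow> i = j"
proof (intro exI conjI ballI impI)
  let ?D = "(\<lambda>(i, j). setdist (S i) (S j)) ` {(i, j) \<in> I \<times> I. i \<noteq> j}"
  have fin: "finite ?D" using assms(1) by (auto intro: finite_subset[of _ "I \<times> I"])
  have pos: "setdist (S i) (S j) > 0" if "i \<in> I" "j \<in> I" "i \<noteq> j" for i j
    using assms(2,3) that by (simp add: setdist_gt_0_compact_closed compact_imp_closed)
  show "Min (insert 1 ?D) > 0"
    using fin pos by (subst Min_gr_iff) auto
  fix i j x y assume ij: "i \<in> I" "j \<in> I" and xy: "x \<in> S i" "y \<in> S j" "dist x y < Min (insert 1 ?D)"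
  show "i = j"
  proof (rule ccontr)
    assume "i \<noteq> j"
    then have "Min (insert 1 ?D) \<le> setdist (S i) (S j)" using fin ij by (intro Min_le) auto
    also have "\<dots> \<le> dist x y" using xy(1,2) by (rule setdist_le_dist)
    finally show False using xy by simp
  qed
qed

locale interval_union =
  fixes n :: nat and c d :: "nat \<Rightarrow> real" and H :: "real set"
  assumes H_eq: "H = (\<Union>j\<in>{1..n}. {c j<..<d j})"
    and c_less_d: "\<forall>j\<in>{1..n}. c j < d j"
    and disjoint: "\<forall>j\<in>{1..n}. \<forall>k\<in>{1..n}. j \<noteq> k \<longrightarrow> {c j..d j} \<inter> {c k..d k} = {}"
begin

lemma open_H: "open H"
  unfolding H_eq by auto

lemma closure_H_eq: "closure H = (\<Union>j\<in>{1..n}. {c j..d j})"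
proof
  have "H \<subseteq> (\<Union>j\<in>{1..n}. {c j..d j})" unfolding H_eq by auto
  then show "closure H \<subseteq> (\<Union>j\<in>{1..n}. {c j..d j})"
    by (rule closure_minimal) (intro closed_UN, auto)
  have "{c j..d j} \<subseteq> closure H" if j: "j \<in> {1..n}" for j
  proof -
    have "{c j..d j} = closure {c j<..<d j}" using c_less_d j by simp
    also have "\<dots> \<subseteq> closure H" unfolding H_eq by (rule closure_mono) (use j in auto)
    finally show ?thesis .
  qed
  then show "(\<Union>j\<in>{1..n}. {c j..d j}) \<subseteq> closure H" by blast
qed

lemma compact_closure_H: "compact (closure H)"
  unfolding closure_H_eq by (intro compact_UN) auto

lemma at_within_closure_H:
  assumes j: "j \<in> {1..n}" and x: "x \<in> {c j..d j}"
  shows "at x within closure H = at x within {c j..d j}"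
proof (rule at_within_nhd)
  let ?U = "- (\<Union>k\<in>{1..n} - {j}. {c k..d k})"
  show "open ?U" by (intro open_Compl closed_UN) auto
  show "x \<in> ?U" using disjoint j x by blast
  show "closure H \<inter> ?U - {x} = {c j..d j} \<inter> ?U - {x}"
    unfolding closure_H_eq using j by blast
qed

lemma Dwithin_closure_H:
  assumes f: "C1_closure H f f'" and x: "x \<in> closure H"
  shows "Dwithin (closure H) f x = f' x"
proof -
  obtain j where j: "j \<in> {1..n}" "x \<in> {c j..d j}" using x closure_H_eq by auto
  have sub: "{c j..d j} \<subseteq> closure H" using closure_H_eq j by auto
  have cd: "c j < d j" using c_less_d j by auto
  have "(f has_real_derivative f' y) (at y)" if "y \<in> {c j<..<d j}" for y
    using f j(1) that unfolding C1_closure_def H_eq by blast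
  then have "(f has_real_derivative f' x) (at x within {c j..d j})"
    using f j(2) continuous_on_subset[OF _ sub] unfolding C1_closure_def
    by (intro has_real_derivative_within_Icc) auto
  moreover have "at x within {c j..d j} \<noteq> bot"
    using cd j by (simp add: trivial_limit_within)
  ultimately show ?thesis
    using Dwithin_eq at_within_closure_H[OF j] by metis
qed

lemma lipschitz_if_C1_closure:
  assumes f: "C1_closure H f f'"
  shows "\<exists>K. \<forall>x\<in>H. \<forall>y\<in>H. \<bar>f x - f y\<bar> \<le> K * \<bar>x - y\<bar>"
proof -
  obtain T where T: "\<forall>x\<in>closure H. \<bar>f x\<bar> \<le> T"
    using compact_abs_bound[OF compact_closure_H] f unfolding C1_closure_def by blast
  obtain D where D: "\<forall>x\<in>closure H. \<bar>f' x\<bar> \<le> D"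
    using compact_abs_bound[OF compact_closure_H] f unfolding C1_closure_def by blast
  have "\<exists>\<delta>>0. \<forall>j\<in>{1..n}. \<forall>k\<in>{1..n}. \<forall>x\<in>{c j..d j}. \<forall>y\<in>{c k..d k}. dist x y < \<delta> \<longrightarrow> j = k"
    using c_less_d disjoint by (intro finite_compacts_separated) (auto simp: less_imp_le)
  then obtain \<delta> where \<delta>: "\<delta> > 0"
    and sep: "\<And>j k x y. j \<in> {1..n} \<Longrightarrow> k \<in> {1..n} \<Longrightarrow> x \<in> {c j..d j} \<Longrightarrow> y \<in> {c k..d k} \<Longrightarrow>
      dist x y < \<delta> \<Longrightarrow> j = k"
    by blast
  define K where "K = \<bar>D\<bar> + 2 * \<bar>T\<bar> / \<delta>"
  have "\<bar>f y - f x\<bar> \<le> K * (y - x)" if x: "x \<in> H" and y: "y \<in> H" and xy: "x < y" for x y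
  proof (cases "y - x < \<delta>")
    case True
    obtain j k where j: "j \<in> {1..n}" "x \<in> {c j<..<d j}" and k: "k \<in> {1..n}" "y \<in> {c k<..<d k}"
      using x y unfolding H_eq by auto
    have "dist x y < \<delta>" using True xy by (simp add: dist_real_def)
    then have "j = k"
      using sep[OF j(1) k(1)] j(2) k(2)
      by (meson greaterThanLessThan_subseteq_atLeastAtMost_iff order_refl subsetD)
    then have segment: "{x..y} \<subseteq> H" using j k unfolding H_eq by auto
    have "(f has_real_derivative f' z) (at z)" if "x \<le> z" "z \<le> y" for z
      using f segment that unfolding C1_closure_def by auto
    then obtain z where z: "x < z" "z < y" "f y - f x = (y - x) * f' z"
      using MVT2[OF xy] by blast
    have "z \<in> closure H" using segment z closure_subset by (meson atLeastAtMost_iff less_imp_le subsetD)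
    then have "\<bar>f' z\<bar> \<le> \<bar>D\<bar>" using D by fastforce
    then have "\<bar>f y - f x\<bar> \<le> \<bar>D\<bar> * (y - x)"
      using z xy by (auto simp: abs_mult intro: mult_left_mono)
    also have "\<dots> \<le> K * (y - x)" unfolding K_def using \<delta> xy by (intro mult_right_mono) auto
    finally show ?thesis .
  next
    case False
    have "\<bar>f x\<bar> \<le> T" "\<bar>f y\<bar> \<le> T" using T x y closure_subset by auto
    then have "\<bar>f y - f x\<bar> \<le> 2 * \<bar>T\<bar>" by linarith
    also have "\<dots> = (2 * \<bar>T\<bar> / \<delta>) * \<delta>" using \<delta> by simp
    also have "\<dots> \<le> (2 * \<bar>T\<bar> / \<delta>) * (y - x)" using False \<delta> by (intro mult_left_mono) auto
    also have "\<dots> \<le> K * (y - x)" unfolding K_def using xy by (intro mult_right_mono) auto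
    finally show ?thesis .
  qed
  then have "\<bar>f x - f y\<bar> \<le> K * \<bar>x - y\<bar>" if "x \<in> H" "y \<in> H" for x y
    using that by (cases x y rule: linorder_cases) (force simp: abs_minus_commute)+
  then show ?thesis by blast
qed

lemma two_points_if_nonempty:
  assumes "H \<noteq> {}"
  shows "\<exists>x\<in>H. \<exists>y\<in>H. x \<noteq> y"
proof -
  obtain j x where j: "j \<in> {1..n}" and x: "x \<in> {c j<..<d j}" using assms unfolding H_eq by blast
  then have "(x + d j) / 2 \<in> H" "(x + d j) / 2 \<noteq> x"
    unfolding H_eq by (auto intro!: bexI[of _ j])
  then show ?thesis using x j unfolding H_eq by blast
qed

end

lemma theta_word_append: "theta_word \<theta> (u @ w) x = theta_word \<theta> w (theta_word \<theta> u x)"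
  by (induction u arbitrary: x) auto

lemma theta_word_in:
  assumes "\<forall>\<beta>\<in>B. \<theta> \<beta> ` H \<subseteq> H" "set \<omega> \<subseteq> B" "x \<in> H"
  shows "theta_word \<theta> \<omega> x \<in> H"
  using assms by (induction \<omega> arbitrary: x) auto

lemma b_word_pos:
  assumes "\<forall>\<beta>\<in>B. \<theta> \<beta> ` H \<subseteq> H" "\<forall>\<beta>\<in>B. \<forall>x\<in>H. b \<beta> x > 0" "set \<omega> \<subseteq> B" "x \<in> H"
  shows "b_word b \<theta> \<omega> x > 0"
  using assms by (induction \<omega> arbitrary: x) (auto simp: image_subset_iff)

lemma words_0: "words B 0 = {[]}"
  unfolding words_def by auto

lemma words_Suc: "words B (Suc N) = (\<lambda>(j, \<omega>). j # \<omega>) ` (B \<times> words B N)"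
proof
  show "words B (Suc N) \<subseteq> (\<lambda>(j, \<omega>). j # \<omega>) ` (B \<times> words B N)"
  proof
    fix \<omega> assume "\<omega> \<in> words B (Suc N)"
    then obtain j u where "\<omega> = j # u" "j \<in> B" "u \<in> words B N"
      unfolding words_def by (cases \<omega>) auto
    then show "\<omega> \<in> (\<lambda>(j, \<omega>). j # \<omega>) ` (B \<times> words B N)" by force
  qed
qed (auto simp: words_def)

lemma words_nonempty:
  assumes "j \<in> B"
  shows "replicate N j \<in> words B N"
  using assms unfolding words_def by auto

lemma eigen_equation_words:
  assumes "finite B" "\<forall>\<beta>\<in>B. \<theta> \<beta> ` H \<subseteq> H" "\<forall>\<beta>\<in>B. \<forall>x\<in>H. b \<beta> x > 0"
    and eig: "\<forall>x\<in>H. (\<Sum>\<beta>\<in>B. b \<beta> x powr s * v (\<theta> \<beta> x)) = r * v x"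
    and "x \<in> H"
  shows "(\<Sum>\<omega>\<in>words B N. b_word b \<theta> \<omega> x powr s * v (theta_word \<theta> \<omega> x)) = r ^ N * v x"
  using \<open>x \<in> H\<close>
proof (induction N arbitrary: x)
  case 0
  then show ?case by (simp add: words_0)
next
  case (Suc N)
  have inj: "inj_on (\<lambda>(j, \<omega>). j # \<omega>) (B \<times> words B N)" by (auto simp: inj_on_def)
  have "(\<Sum>\<omega>\<in>words B (Suc N). b_word b \<theta> \<omega> x powr s * v (theta_word \<theta> \<omega> x))
      = (\<Sum>j\<in>B. \<Sum>\<omega>\<in>words B N. b_word b \<theta> (j # \<omega>) x powr s * v (theta_word \<theta> (j # \<omega>) x))"
    unfolding words_Suc sum.reindex[OF inj] sum.cartesian_product by (simp add: case_prod_unfold)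
  also have "\<dots> = (\<Sum>j\<in>B. b j x powr s * (\<Sum>\<omega>\<in>words B N.
      b_word b \<theta> \<omega> (\<theta> j x) powr s * v (theta_word \<theta> \<omega> (\<theta> j x))))"
    unfolding sum_distrib_left
  proof (intro sum.cong refl)
    fix j \<omega> assume j: "j \<in> B" and \<omega>: "\<omega> \<in> words B N"
    have "\<theta> j x \<in> H" using assms(2) j Suc.prems by auto
    then have "b_word b \<theta> \<omega> (\<theta> j x) > 0"
      using b_word_pos[OF assms(2,3)] \<omega> unfolding words_def by auto
    then show "b_word b \<theta> (j # \<omega>) x powr s * v (theta_word \<theta> (j # \<omega>) x)
      = b j x powr s * (b_word b \<theta> \<omega> (\<theta> j x) powr s * v (theta_word \<theta> \<omega> (\<theta> j x)))"
      using assms(3) j Suc.prems by (simp add: powr_mult)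
  qed
  also have "\<dots> = r ^ N * (\<Sum>j\<in>B. b j x powr s * v (\<theta> j x))"
    using Suc.IH assms(2) Suc.prems by (simp add: sum_distrib_left image_subset_iff mult_ac)
  also have "\<dots> = r ^ Suc N * v x" using eig Suc.prems by simp
  finally show ?case .
qed

fun theta_word_deriv ::
  "('b \<Rightarrow> real \<Rightarrow> real) \<Rightarrow> ('b \<Rightarrow> real \<Rightarrow> real) \<Rightarrow> 'b list \<Rightarrow> real \<Rightarrow> real" where
  "theta_word_deriv \<theta> \<theta>' [] x = 1"
| "theta_word_deriv \<theta> \<theta>' (j # \<omega>) x = theta_word_deriv \<theta> \<theta>' \<omega> (\<theta> j x) * \<theta>' j x"

text \<open>With \<open>L = (\<lambda>j y. b' j y / b j y)\<close> this is the logarithmic derivative of \<open>b_word b \<theta> \<omega>\<close>.\<close>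
fun b_word_logderiv ::
  "('b \<Rightarrow> real \<Rightarrow> real) \<Rightarrow> ('b \<Rightarrow> real \<Rightarrow> real) \<Rightarrow> ('b \<Rightarrow> real \<Rightarrow> real) \<Rightarrow> 'b list \<Rightarrow> real \<Rightarrow> real"
where
  "b_word_logderiv \<theta> \<theta>' L [] x = 0"
| "b_word_logderiv \<theta> \<theta>' L (j # \<omega>) x = L j x + b_word_logderiv \<theta> \<theta>' L \<omega> (\<theta> j x) * \<theta>' j x"

lemma b_word_logderiv_snoc:
  "b_word_logderiv \<theta> \<theta>' L (\<omega> @ [j]) x
     = b_word_logderiv \<theta> \<theta>' L \<omega> x + L j (theta_word \<theta> \<omega> x) * theta_word_deriv \<theta> \<theta>' \<omega> x"
  by (induction \<omega> arbitrary: x) (auto simp: algebra_simps)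

lemma has_real_derivative_theta_word:
  assumes "\<forall>\<beta>\<in>B. \<theta> \<beta> ` H \<subseteq> H" "\<forall>\<beta>\<in>B. \<forall>x\<in>H. (\<theta> \<beta> has_real_derivative \<theta>' \<beta> x) (at x)"
    and "set \<omega> \<subseteq> B" "x \<in> H"
  shows "(theta_word \<theta> \<omega> has_real_derivative theta_word_deriv \<theta> \<theta>' \<omega> x) (at x)"
  using assms(3,4)
proof (induction \<omega> arbitrary: x)
  case Nil
  have "theta_word \<theta> [] = (\<lambda>x. x)" by auto
  then show ?case by simp
next
  case (Cons j \<omega>)
  then have "(theta_word \<theta> \<omega> has_real_derivative theta_word_deriv \<theta> \<theta>' \<omega> (\<theta> j x)) (at (\<theta> j x))"
    using assms(1) by auto
  from DERIV_chain2[where g="\<theta> j", OF this] show ?case using assms(2) Cons.prems by auto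
qed

lemma has_real_derivative_b_word:
  assumes "\<forall>\<beta>\<in>B. \<theta> \<beta> ` H \<subseteq> H" "\<forall>\<beta>\<in>B. \<forall>x\<in>H. (\<theta> \<beta> has_real_derivative \<theta>' \<beta> x) (at x)"
    and "\<forall>\<beta>\<in>B. \<forall>x\<in>H. (b \<beta> has_real_derivative b' \<beta> x) (at x)" "\<forall>\<beta>\<in>B. \<forall>x\<in>H. b \<beta> x > 0"
    and "set \<omega> \<subseteq> B" "x \<in> H"
  shows "(b_word b \<theta> \<omega> has_real_derivative
           b_word b \<theta> \<omega> x * b_word_logderiv \<theta> \<theta>' (\<lambda>j y. b' j y / b j y) \<omega> x) (at x)"
  using assms(5,6)
proof (induction \<omega> arbitrary: x)
  case Nil
  then show ?case by simp
next
  case (Cons j \<omega>)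
  let ?L = "b_word_logderiv \<theta> \<theta>' (\<lambda>j y. b' j y / b j y)"
  have j: "j \<in> B" and "\<theta> j x \<in> H" using assms(1) Cons.prems by auto
  then have "(b_word b \<theta> \<omega> has_real_derivative b_word b \<theta> \<omega> (\<theta> j x) * ?L \<omega> (\<theta> j x)) (at (\<theta> j x))"
    using Cons by auto
  from DERIV_chain2[where g="\<theta> j", OF this]
  have "((\<lambda>y. b_word b \<theta> \<omega> (\<theta> j y)) has_real_derivative
      b_word b \<theta> \<omega> (\<theta> j x) * ?L \<omega> (\<theta> j x) * \<theta>' j x) (at x)"
    using assms(2) j Cons.prems by auto
  from DERIV_mult[OF _ this, of "b j" "b' j x"]
  have "((\<lambda>y. b j y * b_word b \<theta> \<omega> (\<theta> j y)) has_real_derivative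
      b' j x * b_word b \<theta> \<omega> (\<theta> j x) + b_word b \<theta> \<omega> (\<theta> j x) * ?L \<omega> (\<theta> j x) * \<theta>' j x * b j x) (at x)"
    (is "(_ has_real_derivative ?D) _")
    using assms(3) j Cons.prems by auto
  moreover have "b_word b \<theta> (j # \<omega>) = (\<lambda>y. b j y * b_word b \<theta> \<omega> (\<theta> j y))" by auto
  moreover have "b j x > 0" using assms(4) j Cons.prems by auto
  then have "?D = b_word b \<theta> (j # \<omega>) x * ?L (j # \<omega>) x" by (simp add: field_simps)
  ultimately show ?case by simp
qed

lemma abs_b_word_logderiv_le:
  assumes "\<forall>\<beta>\<in>B. \<theta> \<beta> ` H \<subseteq> H" and L: "\<forall>j\<in>B. \<forall>y\<in>H. \<bar>L j y\<bar> \<le> C"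
    and \<theta>': "\<And>\<omega> x. set \<omega> \<subseteq> B \<Longrightarrow> x \<in> H \<Longrightarrow> \<bar>theta_word_deriv \<theta> \<theta>' \<omega> x\<bar> \<le> e (length \<omega>)"
    and "set \<omega> \<subseteq> B" "x \<in> H"
  shows "\<bar>b_word_logderiv \<theta> \<theta>' L \<omega> x\<bar> \<le> C * (\<Sum>k<length \<omega>. e k)"
  using assms(4)
proof (induction \<omega> rule: rev_induct)
  case Nil
  then show ?case by simp
next
  case (snoc j \<omega>)
  have "theta_word \<theta> \<omega> x \<in> H" using theta_word_in[OF assms(1)] snoc.prems \<open>x \<in> H\<close> by auto
  then have "\<bar>L j (theta_word \<theta> \<omega> x) * theta_word_deriv \<theta> \<theta>' \<omega> x\<bar> \<le> C * e (length \<omega>)"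
    unfolding abs_mult using L \<theta>' snoc.prems \<open>x \<in> H\<close>
    by (intro mult_mono) (auto intro: order_trans[OF abs_ge_zero])
  then show ?case
    using snoc by (auto simp: b_word_logderiv_snoc distrib_left intro: order_trans[OF abs_triangle_ineq])
qed

definition difference_quotients ::
  "('b \<Rightarrow> real \<Rightarrow> real) \<Rightarrow> 'b set \<Rightarrow> real set \<Rightarrow> nat \<Rightarrow> real set" where
  "difference_quotients \<theta> B H \<nu> =
     {\<bar>theta_word \<theta> \<omega> x - theta_word \<theta> \<omega> y\<bar> / \<bar>x - y\<bar> |
       \<omega> x y. \<omega> \<in> words B \<nu> \<and> x \<in> H \<and> y \<in> H \<and> x \<noteq> y}"

lemma lipschitz_theta_word:
  assumes "\<forall>\<beta>\<in>B. \<theta> \<beta> ` H \<subseteq> H"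
    and lip: "\<forall>\<beta>\<in>B. \<forall>x\<in>H. \<forall>y\<in>H. \<bar>\<theta> \<beta> x - \<theta> \<beta> y\<bar> \<le> K * \<bar>x - y\<bar>" and "K \<ge> 0"
    and "set \<omega> \<subseteq> B" "x \<in> H" "y \<in> H"
  shows "\<bar>theta_word \<theta> \<omega> x - theta_word \<theta> \<omega> y\<bar> \<le> K ^ length \<omega> * \<bar>x - y\<bar>"
  using assms(4-6)
proof (induction \<omega> arbitrary: x y)
  case (Cons j \<omega>)
  then have "\<theta> j x \<in> H" "\<theta> j y \<in> H" using assms(1) by (auto simp: image_subset_iff)
  then have "\<bar>theta_word \<theta> (j # \<omega>) x - theta_word \<theta> (j # \<omega>) y\<bar> \<le> K ^ length \<omega> * \<bar>\<theta> j x - \<theta> j y\<bar>"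
    using Cons by simp
  also have "\<dots> \<le> K ^ length \<omega> * (K * \<bar>x - y\<bar>)"
    using lip Cons.prems \<open>K \<ge> 0\<close> by (intro mult_left_mono) auto
  finally show ?case by (simp add: mult_ac)
qed simp

lemma bdd_above_difference_quotients:
  assumes "finite B" "\<forall>\<beta>\<in>B. \<theta> \<beta> ` H \<subseteq> H"
    and "\<forall>\<beta>\<in>B. \<exists>K. \<forall>x\<in>H. \<forall>y\<in>H. \<bar>\<theta> \<beta> x - \<theta> \<beta> y\<bar> \<le> K * \<bar>x - y\<bar>"
  shows "bdd_above (difference_quotients \<theta> B H \<nu>)"
proof -
  obtain K\<^sub>\<beta> where K\<^sub>\<beta>: "\<forall>\<beta>\<in>B. \<forall>x\<in>H. \<forall>y\<in>H. \<bar>\<theta> \<beta> x - \<theta> \<beta> y\<bar> \<le> K\<^sub>\<beta> \<beta> * \<bar>x - y\<bar>"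
    using bchoice[OF assms(3)] by blast
  define K where "K = (\<Sum>\<beta>\<in>B. \<bar>K\<^sub>\<beta> \<beta>\<bar>)"
  have "K\<^sub>\<beta> \<beta> \<le> K" if "\<beta> \<in> B" for \<beta>
  proof -
    have "\<bar>K\<^sub>\<beta> \<beta>\<bar> \<le> K" unfolding K_def using assms(1) that by (intro member_le_sum) auto
    then show ?thesis by linarith
  qed
  then have lip: "\<forall>\<beta>\<in>B. \<forall>x\<in>H. \<forall>y\<in>H. \<bar>\<theta> \<beta> x - \<theta> \<beta> y\<bar> \<le> K * \<bar>x - y\<bar>"
    using K\<^sub>\<beta> by (meson abs_ge_zero mult_right_mono order_trans)
  have "K \<ge> 0" unfolding K_def by (simp add: sum_nonneg)
  show ?thesis
  proof (rule bdd_aboveI)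
    fix q assume "q \<in> difference_quotients \<theta> B H \<nu>"
    then obtain \<omega> x y where q: "q = \<bar>theta_word \<theta> \<omega> x - theta_word \<theta> \<omega> y\<bar> / \<bar>x - y\<bar>"
      and \<omega>: "\<omega> \<in> words B \<nu>" and xy: "x \<in> H" "y \<in> H" "x \<noteq> y"
      unfolding difference_quotients_def by blast
    have "\<bar>theta_word \<theta> \<omega> x - theta_word \<theta> \<omega> y\<bar> \<le> K ^ \<nu> * \<bar>x - y\<bar>"
      using lipschitz_theta_word[OF assms(2) lip \<open>K \<ge> 0\<close>] \<omega> xy unfolding words_def by auto
    then show "q \<le> K ^ \<nu>" unfolding q using xy by (simp add: divide_le_eq)
  qed
qed

locale contraction_ratios =
  fixes B :: "'b set" and \<theta> :: "'b \<Rightarrow> real \<Rightarrow> real" and H :: "real set"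
    and \<epsilon> :: "nat \<Rightarrow> real" and \<mu> :: nat and \<kappa> :: real
  assumes maps_H: "\<forall>\<beta>\<in>B. \<theta> \<beta> ` H \<subseteq> H"
    and B_nonempty: "B \<noteq> {}"
    and two_points: "\<exists>x\<in>H. \<exists>y\<in>H. x \<noteq> y"
    and bdd_above_quotients: "\<And>\<nu>. bdd_above (difference_quotients \<theta> B H \<nu>)"
    and eps_0: "\<epsilon> 0 = 1"
    and eps_eq: "\<forall>\<nu>\<ge>1. \<epsilon> \<nu> = Sup (difference_quotients \<theta> B H \<nu>)"
    and mu_pos: "\<mu> \<ge> 1"
    and kappa_less_1: "\<kappa> < 1"
    and contraction: "\<forall>\<omega>\<in>words B \<mu>. \<forall>x\<in>H. \<forall>y\<in>H.
           \<bar>theta_word \<theta> \<omega> x - theta_word \<theta> \<omega> y\<bar> \<le> \<kappa> * \<bar>x - y\<bar>"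
begin

lemma difference_quotients_nonempty: "difference_quotients \<theta> B H \<nu> \<noteq> {}"
proof -
  obtain x y where "x \<in> H" "y \<in> H" "x \<noteq> y" using two_points by auto
  moreover obtain j where "j \<in> B" using B_nonempty by auto
  then have "replicate \<nu> j \<in> words B \<nu>" by (rule words_nonempty)
  ultimately show ?thesis
    unfolding difference_quotients_def by blast
qed

lemma difference_quotient_le_eps:
  assumes "\<omega> \<in> words B \<nu>" "x \<in> H" "y \<in> H" "x \<noteq> y"
  shows "\<bar>theta_word \<theta> \<omega> x - theta_word \<theta> \<omega> y\<bar> / \<bar>x - y\<bar> \<le> \<epsilon> \<nu>"
proof (cases "\<nu> = 0")
  case True
  then show ?thesis using assms eps_0 unfolding words_def by simp
next
  case False
  have "\<bar>theta_word \<theta> \<omega> x - theta_word \<theta> \<omega> y\<bar> / \<bar>x - y\<bar> \<in> difference_quotients \<theta> B H \<nu>"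
    unfolding difference_quotients_def using assms by blast
  then show ?thesis
    using cSup_upper[OF _ bdd_above_quotients] eps_eq False by auto
qed

lemma eps_nonneg: "\<epsilon> \<nu> \<ge> 0"
proof -
  obtain q where "q \<in> difference_quotients \<theta> B H \<nu>" using difference_quotients_nonempty by auto
  then obtain \<omega> x y where "q = \<bar>theta_word \<theta> \<omega> x - theta_word \<theta> \<omega> y\<bar> / \<bar>x - y\<bar>"
    "\<omega> \<in> words B \<nu>" "x \<in> H" "y \<in> H" "x \<noteq> y"
    unfolding difference_quotients_def by blast
  then show ?thesis
    using difference_quotient_le_eps[of \<omega> \<nu> x y] by (meson divide_nonneg_nonneg abs_ge_zero order_trans)
qed

lemma eps_le_if_difference_quotients_le:
  assumes "\<nu> \<ge> 1"
    and "\<And>\<omega> x y. \<omega> \<in> words B \<nu> \<Longrightarrow> x \<in> H \<Longrightarrow> y \<in> H \<Longrightarrow> x \<noteq> y \<Longrightarrow>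
           \<bar>theta_word \<theta> \<omega> x - theta_word \<theta> \<omega> y\<bar> / \<bar>x - y\<bar> \<le> a"
  shows "\<epsilon> \<nu> \<le> a"
  unfolding eps_eq[rule_format, OF assms(1)]
  by (rule cSup_least[OF difference_quotients_nonempty]) (auto simp: difference_quotients_def assms(2))

lemma eps_add_le: "\<epsilon> (k + l) \<le> \<epsilon> k * \<epsilon> l"
proof (cases "k = 0 \<or> l = 0")
  case True
  then show ?thesis using eps_0 by auto
next
  case False
  show ?thesis
  proof (rule eps_le_if_difference_quotients_le)
    fix \<omega> x y assume \<omega>: "\<omega> \<in> words B (k + l)" and xy: "x \<in> H" "y \<in> H" "x \<noteq> y"
    let ?u = "take k \<omega>" and ?w = "drop k \<omega>"
    let ?x = "theta_word \<theta> ?u x" and ?y = "theta_word \<theta> ?u y"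
    have u: "?u \<in> words B k" and w: "?w \<in> words B l"
      using \<omega> unfolding words_def by (auto dest: in_set_takeD in_set_dropD)
    have xy': "?x \<in> H" "?y \<in> H" using theta_word_in[OF maps_H] u xy unfolding words_def by auto
    have split: "theta_word \<theta> \<omega> z = theta_word \<theta> ?w (theta_word \<theta> ?u z)" for z
      by (metis append_take_drop_id theta_word_append)
    show "\<bar>theta_word \<theta> \<omega> x - theta_word \<theta> \<omega> y\<bar> / \<bar>x - y\<bar> \<le> \<epsilon> k * \<epsilon> l"
    proof (cases "?x = ?y")
      case True
      then show ?thesis unfolding split using eps_nonneg by simp
    next
      case False
      have "\<bar>theta_word \<theta> \<omega> x - theta_word \<theta> \<omega> y\<bar> / \<bar>x - y\<bar>
          = (\<bar>theta_word \<theta> ?w ?x - theta_word \<theta> ?w ?y\<bar> / \<bar>?x - ?y\<bar>) * (\<bar>?x - ?y\<bar> / \<bar>x - y\<bar>)"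
        unfolding split using False by simp
      also have "\<dots> \<le> \<epsilon> l * \<epsilon> k"
        using difference_quotient_le_eps[OF w xy' False] difference_quotient_le_eps[OF u xy]
        by (intro mult_mono) (auto simp: eps_nonneg)
      finally show ?thesis by (simp add: mult.commute)
    qed
  qed (use False in auto)
qed

lemma eps_mu_le: "\<epsilon> \<mu> \<le> \<kappa>"
  by (rule eps_le_if_difference_quotients_le[OF mu_pos]) (use contraction in \<open>auto simp: divide_le_eq\<close>)

lemma eps_mult_power_le: "\<epsilon> (\<mu> * q + r) \<le> \<epsilon> \<mu> ^ q * \<epsilon> r"
proof (induction q)
  case (Suc q)
  have "\<epsilon> (\<mu> * Suc q + r) \<le> \<epsilon> \<mu> * \<epsilon> (\<mu> * q + r)"
    using eps_add_le[of \<mu> "\<mu> * q + r"] by (simp add: add.assoc)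
  also have "\<dots> \<le> \<epsilon> \<mu> * (\<epsilon> \<mu> ^ q * \<epsilon> r)" using Suc eps_nonneg by (intro mult_left_mono)
  finally show ?case by simp
qed simp

lemma eps_le_geometric: "\<exists>C \<rho>. 0 < \<rho> \<and> \<rho> < 1 \<and> (\<forall>\<nu>. \<epsilon> \<nu> \<le> C * \<rho> ^ \<nu>)"
proof -
  define \<kappa>' where "\<kappa>' = max \<kappa> (1 / 2)" \<comment> \<open>\<open>\<kappa>\<close> itself may be \<open>\<le> 0\<close>\<close>
  define \<rho> where "\<rho> = root \<mu> \<kappa>'"
  define A where "A = (\<Sum>r<\<mu>. \<epsilon> r)"
  have \<kappa>': "0 < \<kappa>'" "\<kappa>' < 1" unfolding \<kappa>'_def using kappa_less_1 by auto
  have \<rho>: "0 < \<rho>" "\<rho> < 1" "\<rho> ^ \<mu> = \<kappa>'"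
    unfolding \<rho>_def using \<kappa>' mu_pos by (auto simp: real_root_lt_1_iff real_root_pow_pos2)
  have "\<epsilon> \<nu> \<le> A / \<kappa>' * \<rho> ^ \<nu>" for \<nu>
  proof -
    define q r where "q = \<nu> div \<mu>" and "r = \<nu> mod \<mu>"
    have \<nu>: "\<nu> = \<mu> * q + r" and r: "r < \<mu>" unfolding q_def r_def using mu_pos by auto
    have "\<epsilon> r \<le> A" unfolding A_def using r eps_nonneg by (intro member_le_sum) auto
    then have "A \<ge> 0" using eps_nonneg[of r] by linarith
    have "\<epsilon> \<nu> \<le> \<epsilon> \<mu> ^ q * \<epsilon> r" unfolding \<nu> by (rule eps_mult_power_le)
    also have "\<dots> \<le> \<kappa>' ^ q * A"
      using eps_mu_le eps_nonneg \<open>\<epsilon> r \<le> A\<close> \<kappa>'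
      by (intro mult_mono power_mono) (auto simp: \<kappa>'_def)
    also have "\<dots> = A / \<kappa>' * \<kappa>' ^ Suc q" using \<kappa>' by simp
    also have "\<dots> = A / \<kappa>' * \<rho> ^ (\<mu> * Suc q)" by (simp only: power_mult \<rho>(3))
    also have "\<dots> \<le> A / \<kappa>' * \<rho> ^ \<nu>"
      using \<rho> \<kappa>' \<nu> r \<open>A \<ge> 0\<close> by (intro mult_left_mono power_decreasing) auto
    finally show ?thesis .
  qed
  then show ?thesis using \<rho> by blast
qed

lemma summable_eps: "summable \<epsilon>"
proof -
  obtain C \<rho> where "0 < \<rho>" "\<rho> < 1" and le: "\<And>\<nu>. \<epsilon> \<nu> \<le> C * \<rho> ^ \<nu>"
    using eps_le_geometric by blast
  then have "summable (\<lambda>\<nu>. C * \<rho> ^ \<nu>)" by (intro summable_mult summable_geometric) auto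
  then show ?thesis by (rule summable_comparison_test'[where N = 0]) (use le eps_nonneg in auto)
qed

end

locale positive_eigenfunction =
  interval_union n c d H + contraction_ratios B \<theta> H \<epsilon> \<mu> \<kappa>
  for n c d H and B :: "'b set" and \<theta> \<epsilon> \<mu> \<kappa> +
  fixes b b' \<theta>' :: "'b \<Rightarrow> real \<Rightarrow> real" and s r :: real and v v' :: "real \<Rightarrow> real"
    and C1 :: real
  assumes finite_B: "finite B"
    and b_pos: "\<forall>\<beta>\<in>B. \<forall>x\<in>closure H. b \<beta> x > 0"
    and b_C1: "\<forall>\<beta>\<in>B. C1_closure H (b \<beta>) (b' \<beta>)"
    and \<theta>_C1: "\<forall>\<beta>\<in>B. C1_closure H (\<theta> \<beta>) (\<theta>' \<beta>)"
    and v_C1: "C1_closure H v v'"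
    and v_pos: "\<forall>x\<in>closure H. v x > 0"
    and r_pos: "r > 0"
    and s_pos: "s > 0"
    and eigen: "\<forall>x\<in>closure H. (\<Sum>\<beta>\<in>B. b \<beta> x powr s * v (\<theta> \<beta> x)) = r * v x"
    and C1_eq: "C1 = Sup {\<bar>deriv (b \<beta>) x\<bar> / b \<beta> x | \<beta> x. \<beta> \<in> B \<and> x \<in> H}"
begin

abbreviation b_logderiv :: "'b \<Rightarrow> real \<Rightarrow> real" where
  "b_logderiv \<equiv> \<lambda>\<beta> y. b' \<beta> y / b \<beta> y"

abbreviation word_logderiv :: "'b list \<Rightarrow> real \<Rightarrow> real" where
  "word_logderiv \<equiv> b_word_logderiv \<theta> \<theta>' b_logderiv"

lemma b_pos_H: "\<forall>\<beta>\<in>B. \<forall>x\<in>H. b \<beta> x > 0"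
  using b_pos closure_subset by blast

lemma v_pos_H: "x \<in> H \<Longrightarrow> v x > 0"
  using v_pos closure_subset by blast

lemma \<theta>_deriv: "\<forall>\<beta>\<in>B. \<forall>x\<in>H. (\<theta> \<beta> has_real_derivative \<theta>' \<beta> x) (at x)"
  using \<theta>_C1 unfolding C1_closure_def by blast

lemma b_deriv: "\<forall>\<beta>\<in>B. \<forall>x\<in>H. (b \<beta> has_real_derivative b' \<beta> x) (at x)"
  using b_C1 unfolding C1_closure_def by blast

lemma iterated_eigen_equation:
  assumes "x \<in> H"
  shows "(\<Sum>\<omega>\<in>words B N. b_word b \<theta> \<omega> x powr s * v (theta_word \<theta> \<omega> x)) = r ^ N * v x"
  using eigen closure_subset assms by (intro eigen_equation_words[OF finite_B maps_H b_pos_H]) auto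

lemma abs_theta_word_deriv_le:
  assumes "set \<omega> \<subseteq> B" "x \<in> H"
  shows "\<bar>theta_word_deriv \<theta> \<theta>' \<omega> x\<bar> \<le> \<epsilon> (length \<omega>)"
proof (rule abs_derivative_le_if_difference_quotients_le[OF open_H assms(2)])
  show "(theta_word \<theta> \<omega> has_real_derivative theta_word_deriv \<theta> \<theta>' \<omega> x) (at x)"
    by (rule has_real_derivative_theta_word[OF maps_H \<theta>_deriv assms])
  show "\<bar>theta_word \<theta> \<omega> y - theta_word \<theta> \<omega> x\<bar> / \<bar>y - x\<bar> \<le> \<epsilon> (length \<omega>)"
    if "y \<in> H" "y \<noteq> x" for y
    using difference_quotient_le_eps[of \<omega> "length \<omega>" y x] assms that unfolding words_def by auto
qed

lemma abs_b_logderiv_le_C1: "\<forall>\<beta>\<in>B. \<forall>y\<in>H. \<bar>b_logderiv \<beta> y\<bar> \<le> C1"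
proof (intro ballI)
  let ?S = "{\<bar>deriv (b \<beta>) x\<bar> / b \<beta> x | \<beta> x. \<beta> \<in> B \<and> x \<in> H}"
  have eq: "\<bar>deriv (b \<beta>) y\<bar> / b \<beta> y = \<bar>b_logderiv \<beta> y\<bar>" if "\<beta> \<in> B" "y \<in> H" for \<beta> y
  proof -
    have "deriv (b \<beta>) y = b' \<beta> y" "b \<beta> y > 0"
      using b_deriv b_pos_H that by (auto intro: DERIV_imp_deriv)
    then show ?thesis by (simp add: abs_divide)
  qed
  have "bounded (\<Union>\<beta>\<in>B. (\<lambda>y. b_logderiv \<beta> y) ` closure H)"
    using b_C1 b_pos finite_B unfolding C1_closure_def
    by (intro bounded_UN ballI compact_imp_bounded compact_continuous_image compact_closure_H
        continuous_intros) (auto simp: less_imp_neq[symmetric])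
  then obtain K where K: "\<forall>\<beta>\<in>B. \<forall>y\<in>closure H. \<bar>b_logderiv \<beta> y\<bar> \<le> K"
    unfolding bounded_real by blast
  have "bdd_above ?S"
    using K eq closure_subset by (intro bdd_aboveI[of _ K]) fastforce
  fix \<beta> y assume "\<beta> \<in> B" "y \<in> H"
  then show "\<bar>b_logderiv \<beta> y\<bar> \<le> C1"
    unfolding C1_eq eq[symmetric, OF \<open>\<beta> \<in> B\<close> \<open>y \<in> H\<close>] by (intro cSup_upper \<open>bdd_above ?S\<close>) blast
qed

lemma abs_word_logderiv_le:
  assumes "\<omega> \<in> words B N" "x \<in> H"
  shows "\<bar>word_logderiv \<omega> x\<bar> \<le> C1 * (\<Sum>\<nu>. \<epsilon> \<nu>)"
proof -
  have "\<bar>word_logderiv \<omega> x\<bar> \<le> C1 * (\<Sum>\<nu><N. \<epsilon> \<nu>)"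
    using abs_b_word_logderiv_le[OF maps_H abs_b_logderiv_le_C1 abs_theta_word_deriv_le] assms
    unfolding words_def by auto
  also have "\<dots> \<le> C1 * (\<Sum>\<nu>. \<epsilon> \<nu>)"
  proof (rule mult_left_mono)
    show "(\<Sum>\<nu><N. \<epsilon> \<nu>) \<le> (\<Sum>\<nu>. \<epsilon> \<nu>)"
      using summable_eps eps_nonneg by (intro sum_le_suminf) auto
    obtain \<beta> where "\<beta> \<in> B" using B_nonempty by auto
    then show "0 \<le> C1" using abs_b_logderiv_le_C1 assms(2) by (meson abs_ge_zero order_trans)
  qed
  finally show ?thesis .
qed

lemma v'_eq_weighted_sum:
  assumes x: "x \<in> H"
  shows "v' x = (\<Sum>\<omega>\<in>words B N. b_word b \<theta> \<omega> x powr s * v (theta_word \<theta> \<omega> x) *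
      (s * word_logderiv \<omega> x + v' (theta_word \<theta> \<omega> x) / v (theta_word \<theta> \<omega> x) * theta_word_deriv \<theta> \<theta>' \<omega> x))
      / r ^ N" (is "_ = ?D")
proof -
  have "((\<lambda>y. b_word b \<theta> \<omega> y powr s * v (theta_word \<theta> \<omega> y)) has_real_derivative
      b_word b \<theta> \<omega> x powr s * v (theta_word \<theta> \<omega> x) *
      (s * word_logderiv \<omega> x + v' (theta_word \<theta> \<omega> x) / v (theta_word \<theta> \<omega> x) * theta_word_deriv \<theta> \<theta>' \<omega> x)) (at x)"
    if "\<omega> \<in> words B N" for \<omega>
  proof -
    have \<omega>: "set \<omega> \<subseteq> B" using that unfolding words_def by auto
    have pos: "b_word b \<theta> \<omega> x > 0" by (rule b_word_pos[OF maps_H b_pos_H \<omega> x])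
    have y: "theta_word \<theta> \<omega> x \<in> H" by (rule theta_word_in[OF maps_H \<omega> x])
    have "((\<lambda>y. b_word b \<theta> \<omega> y powr s) has_real_derivative
        b_word b \<theta> \<omega> x powr s * (s * word_logderiv \<omega> x)) (at x)"
      using DERIV_powr[OF has_real_derivative_b_word[OF maps_H \<theta>_deriv b_deriv b_pos_H \<omega> x] pos
          DERIV_const[of s]] pos by (simp add: field_simps)
    moreover have "((\<lambda>y. v (theta_word \<theta> \<omega> y)) has_real_derivative
        v' (theta_word \<theta> \<omega> x) * theta_word_deriv \<theta> \<theta>' \<omega> x) (at x)"
      using DERIV_chain2[OF _ has_real_derivative_theta_word[OF maps_H \<theta>_deriv \<omega> x]] v_C1 y
      unfolding C1_closure_def by blast
    ultimately show ?thesis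
      using v_pos_H[OF y] by (auto elim!: DERIV_cong[OF DERIV_mult] simp: field_simps)
  qed
  then have "((\<lambda>y. (\<Sum>\<omega>\<in>words B N. b_word b \<theta> \<omega> y powr s * v (theta_word \<theta> \<omega> y)) / r ^ N)
      has_real_derivative ?D) (at x)"
    by (intro DERIV_cdivide DERIV_sum)
  then have "(v has_real_derivative ?D) (at x)"
    by (rule has_field_derivative_transform_within_open[OF _ open_H x])
      (use iterated_eigen_equation r_pos in simp)
  then show ?thesis using DERIV_unique v_C1 x unfolding C1_closure_def by blast
qed

lemma signed_logderiv_v_le_approx:
  assumes \<sigma>: "\<bar>\<sigma>\<bar> \<le> 1" and x: "x \<in> H"
    and a: "\<forall>\<omega>\<in>words B N. \<sigma> * word_logderiv \<omega> x \<le> a"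
    and M: "\<forall>y\<in>H. \<bar>v' y / v y\<bar> \<le> M"
  shows "\<sigma> * v' x / v x \<le> s * a + M * \<epsilon> N"
proof -
  let ?w = "\<lambda>\<omega>. b_word b \<theta> \<omega> x powr s * v (theta_word \<theta> \<omega> x)"
  let ?X = "\<lambda>\<omega>. s * word_logderiv \<omega> x
      + v' (theta_word \<theta> \<omega> x) / v (theta_word \<theta> \<omega> x) * theta_word_deriv \<theta> \<theta>' \<omega> x"
  have w_nonneg: "?w \<omega> \<ge> 0" if "\<omega> \<in> words B N" for \<omega>
  proof -
    have "set \<omega> \<subseteq> B" using that unfolding words_def by auto
    then have "v (theta_word \<theta> \<omega> x) > 0" by (rule v_pos_H[OF theta_word_in[OF maps_H _ x]])
    then show ?thesis by (intro mult_nonneg_nonneg) simp_all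
  qed
  have X_le: "\<sigma> * ?X \<omega> \<le> s * a + M * \<epsilon> N" if \<omega>: "\<omega> \<in> words B N" for \<omega>
  proof -
    have y: "theta_word \<theta> \<omega> x \<in> H" using theta_word_in[OF maps_H _ x] \<omega> unfolding words_def by auto
    have "0 \<le> M" using M x by (meson abs_ge_zero order_trans)
    then have "\<bar>v' (theta_word \<theta> \<omega> x) / v (theta_word \<theta> \<omega> x) * theta_word_deriv \<theta> \<theta>' \<omega> x\<bar> \<le> M * \<epsilon> N"
      unfolding abs_mult using M y abs_theta_word_deriv_le[of \<omega> x] \<omega> x unfolding words_def
      by (intro mult_mono) auto
    then have "\<sigma> * (v' (theta_word \<theta> \<omega> x) / v (theta_word \<theta> \<omega> x) * theta_word_deriv \<theta> \<theta>' \<omega> x)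
        \<le> M * \<epsilon> N"
      using mult_le_abs_if_abs_le_1[OF \<sigma>] by (meson order_trans)
    moreover have "s * (\<sigma> * word_logderiv \<omega> x) \<le> s * a" using a \<omega> s_pos by simp
    ultimately show ?thesis by (simp add: algebra_simps)
  qed
  have "\<sigma> * v' x = (\<Sum>\<omega>\<in>words B N. ?w \<omega> * (\<sigma> * ?X \<omega>)) / r ^ N"
    unfolding v'_eq_weighted_sum[OF x, of N] by (simp add: sum_distrib_left mult_ac)
  also have "\<dots> \<le> (\<Sum>\<omega>\<in>words B N. ?w \<omega> * (s * a + M * \<epsilon> N)) / r ^ N"
    using r_pos X_le w_nonneg by (intro divide_right_mono sum_mono mult_left_mono) auto
  also have "\<dots> = v x * (s * a + M * \<epsilon> N)"
    using iterated_eigen_equation[OF x] r_pos by (simp add: sum_distrib_right[symmetric])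
  finally show ?thesis using v_pos_H[OF x] by (simp add: divide_le_eq mult.commute)
qed

lemma signed_logderiv_v_le:
  assumes \<sigma>: "\<bar>\<sigma>\<bar> \<le> 1" and x: "x \<in> H"
    and a: "\<forall>N\<ge>1. \<forall>\<omega>\<in>words B N. \<sigma> * word_logderiv \<omega> x \<le> a"
  shows "\<sigma> * v' x / v x \<le> s * a"
proof -
  have "continuous_on (closure H) (\<lambda>y. v' y / v y)"
    using v_C1 v_pos unfolding C1_closure_def by (intro continuous_intros) auto
  then obtain M where M: "\<forall>y\<in>closure H. \<bar>v' y / v y\<bar> \<le> M"
    using compact_abs_bound[OF compact_closure_H] by blast
  have "(\<lambda>N. s * a + M * \<epsilon> N) \<longlonglongrightarrow> s * a + M * 0"
    by (intro tendsto_intros summable_LIMSEQ_zero[OF summable_eps])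
  moreover have "\<forall>N\<ge>1. \<sigma> * v' x / v x \<le> s * a + M * \<epsilon> N"
    using signed_logderiv_v_le_approx[OF \<sigma> x] a M closure_subset by blast
  ultimately show ?thesis by (intro LIMSEQ_le_const) auto
qed

lemma abs_logderiv_v_le:
  assumes "x \<in> closure H"
  shows "\<bar>Dwithin (closure H) v x\<bar> / v x \<le> C1 * s * (\<Sum>\<nu>. \<epsilon> \<nu>)"
proof -
  have bound_H: "\<bar>v' y\<bar> / v y \<le> C1 * s * (\<Sum>\<nu>. \<epsilon> \<nu>)" if y: "y \<in> H" for y
  proof -
    have signed: "\<sigma> * v' y / v y \<le> C1 * s * (\<Sum>\<nu>. \<epsilon> \<nu>)" if \<sigma>: "\<bar>\<sigma>\<bar> \<le> 1" for \<sigma>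
    proof -
      have "\<forall>N\<ge>1. \<forall>\<omega>\<in>words B N. \<sigma> * word_logderiv \<omega> y \<le> C1 * (\<Sum>\<nu>. \<epsilon> \<nu>)"
        using abs_word_logderiv_le[OF _ y] mult_le_abs_if_abs_le_1[OF \<sigma>] by (meson order_trans)
      from signed_logderiv_v_le[OF \<sigma> y this] show ?thesis by (simp add: mult_ac)
    qed
    have "\<bar>v' y\<bar> / v y = \<bar>v' y / v y\<bar>" using v_pos_H[OF y] by simp
    then show ?thesis using signed[of 1] signed[of "-1"] by (simp add: abs_le_iff)
  qed
  have "continuous_on (closure H) (\<lambda>y. \<bar>v' y\<bar> / v y)"
    using v_C1 v_pos unfolding C1_closure_def by (intro continuous_intros) auto
  from continuous_le_on_closure[OF this assms bound_H]
  show ?thesis using Dwithin_closure_H[OF v_C1 assms] by simp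
qed

lemma sign_of_deriv_v:
  assumes hyp: "\<forall>\<nu>\<ge>1. \<forall>\<omega>\<in>words B \<nu>. \<forall>x\<in>closure H.
      (-1::real) ^ \<delta> * Dwithin (closure H) (b_word b \<theta> \<omega>) x / b_word b \<theta> \<omega> x \<le> 0"
    and x: "x \<in> closure H"
  shows "(-1::real) ^ \<delta> * Dwithin (closure H) v x \<le> 0"
proof -
  have "(-1::real) ^ \<delta> * word_logderiv \<omega> y \<le> 0"
    if "\<nu> \<ge> 1" "\<omega> \<in> words B \<nu>" "y \<in> H" for \<nu> \<omega> y
  proof -
    have \<omega>: "set \<omega> \<subseteq> B" using that unfolding words_def by auto
    have "y \<in> interior (closure H)" using interior_maximal[OF closure_subset open_H] that by blast
    then have "Dwithin (closure H) (b_word b \<theta> \<omega>) y = b_word b \<theta> \<omega> y * word_logderiv \<omega> y"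
      by (rule Dwithin_eq_at[OF _ has_real_derivative_b_word[OF maps_H \<theta>_deriv b_deriv b_pos_H \<omega> \<open>y \<in> H\<close>]])
    moreover have "(-1::real) ^ \<delta> * Dwithin (closure H) (b_word b \<theta> \<omega>) y / b_word b \<theta> \<omega> y \<le> 0"
      using hyp that closure_subset by blast
    moreover have "b_word b \<theta> \<omega> y \<noteq> 0" using b_word_pos[OF maps_H b_pos_H \<omega> \<open>y \<in> H\<close>] by simp
    ultimately show ?thesis by simp
  qed
  then have sign_H: "(-1::real) ^ \<delta> * v' y \<le> 0" if "y \<in> H" for y
    using signed_logderiv_v_le[of "(-1) ^ \<delta>" y 0] that v_pos_H[OF that]
    by (auto simp: divide_le_0_iff)
  have "continuous_on (closure H) (\<lambda>y. (-1::real) ^ \<delta> * v' y)"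
    using v_C1 unfolding C1_closure_def by (intro continuous_intros) auto
  from continuous_le_on_closure[OF this x sign_H]
  show ?thesis using Dwithin_closure_H[OF v_C1 x] by simp
qed

end

theorem theorem6p1:
  fixes n m :: nat and c d :: "nat \<Rightarrow> real" and H :: "real set"
    and B :: "'b set" and b \<theta> :: "'b \<Rightarrow> real \<Rightarrow> real"
    and s r :: real and v :: "real \<Rightarrow> real"
    and \<epsilon> :: "nat \<Rightarrow> real" and C1 :: real
  assumes H_def: "H = (\<Union>j\<in>{1..n}. {c j<..<d j})"
    and cd: "\<forall>j\<in>{1..n}. c j < d j"
    and disj: "\<forall>j\<in>{1..n}. \<forall>k\<in>{1..n}. j \<noteq> k \<longrightarrow> {c j..d j} \<inter> {c k..d k} = {}"
    and finB: "finite B"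
    and m: "m \<ge> 1"
    and b_Cm: "\<forall>\<beta>\<in>B. Cm_closure m H (b \<beta>)"
    and \<theta>_Cm: "\<forall>\<beta>\<in>B. Cm_closure m H (\<theta> \<beta>)"
    and b_pos: "\<forall>\<beta>\<in>B. \<forall>x\<in>closure H. b \<beta> x > 0"
    and \<theta>_maps: "\<forall>\<beta>\<in>B. \<theta> \<beta> ` H \<subseteq> H"
    and contr: "\<exists>\<mu>::nat. \<mu> \<ge> 1 \<and> (\<exists>\<kappa>::real. \<kappa> < 1 \<and>
        (\<forall>\<omega>\<in>words B \<mu>. \<forall>x\<in>closure H. \<forall>y\<in>closure H.
           \<bar>theta_word \<theta> \<omega> x - theta_word \<theta> \<omega> y\<bar> \<le> \<kappa> * \<bar>x - y\<bar>))"
    and s: "s > 0"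
    and v_Cm: "Cm_closure m H v"
    and v_pos: "\<forall>x\<in>closure H. v x > 0"
    and r_pos: "r > 0"
    and eig: "\<forall>x\<in>closure H. (\<Sum>\<beta>\<in>B. b \<beta> x powr s * v (\<theta> \<beta> x)) = r * v x"
    and \<epsilon>0: "\<epsilon> 0 = 1"
    and \<epsilon>_def: "\<forall>\<nu>\<ge>1. \<epsilon> \<nu> = Sup {\<bar>theta_word \<theta> \<omega> x - theta_word \<theta> \<omega> y\<bar> / \<bar>x - y\<bar> |
                   \<omega> x y. \<omega> \<in> words B \<nu> \<and> x \<in> H \<and> y \<in> H \<and> x \<noteq> y}"
    and C1_def: "C1 = Sup {\<bar>deriv (b \<beta>) x\<bar> / b \<beta> x | \<beta> x. \<beta> \<in> B \<and> x \<in> H}"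
  shows "(\<forall>x\<in>closure H. \<bar>Dwithin (closure H) v x\<bar> / v x \<le> C1 * s * (\<Sum>\<nu>. \<epsilon> \<nu>))
       \<and> (\<forall>\<delta>::nat\<in>{0,1}.
            (\<forall>\<nu>\<ge>1. \<forall>\<omega>\<in>words B \<nu>. \<forall>x\<in>closure H.
               (-1::real) ^ \<delta> * Dwithin (closure H) (b_word b \<theta> \<omega>) x / b_word b \<theta> \<omega> x \<le> 0)
            \<longrightarrow> (\<forall>x\<in>closure H. (-1::real) ^ \<delta> * Dwithin (closure H) v x \<le> 0))"
proof (cases "H = {}")
  case False
  interpret interval_union n c d H using H_def cd disj by unfold_locales
  obtain \<mu> \<kappa> where \<mu>: "\<mu> \<ge> 1" and \<kappa>: "\<kappa> < 1"
    and contraction: "\<forall>\<omega>\<in>words B \<mu>. \<forall>x\<in>closure H. \<forall>y\<in>closure H.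
      \<bar>theta_word \<theta> \<omega> x - theta_word \<theta> \<omega> y\<bar> \<le> \<kappa> * \<bar>x - y\<bar>"
    using contr by blast
  obtain v' where v': "C1_closure H v v'"
    using C1_closure_if_Cm_closure[OF v_Cm m open_H] by blast
  obtain b' where b': "\<forall>\<beta>\<in>B. C1_closure H (b \<beta>) (b' \<beta>)"
    using C1_closure_family_if_Cm_closure[OF b_Cm m open_H] by blast
  obtain \<theta>' where \<theta>': "\<forall>\<beta>\<in>B. C1_closure H (\<theta> \<beta>) (\<theta>' \<beta>)"
    using C1_closure_family_if_Cm_closure[OF \<theta>_Cm m open_H] by blast
  obtain x where "x \<in> closure H" using False closure_subset by blast
  then have B_nonempty: "B \<noteq> {}" using eig v_pos r_pos by (metis less_irrefl mult_pos_pos sum.empty)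
  have bdd_above_quotients: "bdd_above (difference_quotients \<theta> B H \<nu>)" for \<nu>
    using finB \<theta>_maps \<theta>' lipschitz_if_C1_closure by (intro bdd_above_difference_quotients) auto
  have two_points: "\<exists>x\<in>H. \<exists>y\<in>H. x \<noteq> y" using two_points_if_nonempty[OF False] .
  interpret positive_eigenfunction n c d H B \<theta> \<epsilon> \<mu> \<kappa> b b' \<theta>' s r v v' C1
  proof unfold_locales
    show "\<forall>\<nu>\<ge>1. \<epsilon> \<nu> = Sup (difference_quotients \<theta> B H \<nu>)"
      using \<epsilon>_def by (simp add: difference_quotients_def)
    show "\<forall>\<omega>\<in>words B \<mu>. \<forall>x\<in>H. \<forall>y\<in>H. \<bar>theta_word \<theta> \<omega> x - theta_word \<theta> \<omega> y\<bar> \<le> \<kappa> * \<bar>x - y\<bar>"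
      using contraction closure_subset by blast
  qed fact+
  show ?thesis using abs_logderiv_v_le sign_of_deriv_v by blast
qed simp

end
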